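(* Let $\mathcal P=\langle F,R\rangle$ be a program and $H$ a hypothesis. Let $IF(F,H)=\{A\mid F(A)\neq\mathcal U,\ H(A)\neq\mathcal U,\ F(A)\neq H(A)\}$, $PF_0=\emptyset$, and for $i\ge1$ $$PF_i=\{A\mid A\leftarrow B\in R \text{ and } B\not\equiv H(A)\text{ w.r.t. } F\oplus H_{/(\mathcal{HB}_{\mathcal P}\setminus IF(F,H))\setminus PF_{i-1}}\},$$ and let $PF=\bigcup_i PF_i$ (the limit of this increasing sequence). Then $$s^H_{\mathcal P}=H_{/(\mathcal{HB}_{\mathcal P}\setminus IF(F,H))\setminus PF}.$$
   Context: Let $\langle \mathcal{B},\le_t,\le_k\rangle$ be a complete, infinitely distributive bilattice with negation satisfying the infinitary interlacing conditions; $\wedge,\vee$ are meet/join for $\le_t$, $\otimes,\oplus$ meet/join for $\le_k$, $\mathcal U$ is the bottom of $\le_k$. A closed formula is built from ground literals and elements of $\mathcal B$ using $\wedge,\vee,\otimes,\oplus,\exists,\forall$ (quantifiers over closed terms). A program $\mathcal P=\langle F,R\rangle$ consists of a function $F$ from the Herbrand base $\mathcal{HB}_{\mathcal P}$ to $\mathcal B$ and a finite set $R$ of ground clauses $A\leftarrow B$, each ground atom being the head of at most one clause; $Head(\mathcal P)$ is the set of heads. An interpretation (hypothesis) is a function $\mathcal{HB}_{\mathcal P}\to\mathcal B$, extended to closed formulas homomorphically ($I(\neg A)=\neg I(A)$, $I(X\wedge Y)=I(X)\wedge I(Y)$ etc., $\exists$ as $\bigvee$, $\forall$ as $\bigwedge$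 over closed instances). Operations on interpretations are pointwise. $I,J$ are compatible if $I(A)\neq\mathcal U$ and $J(A)\neq\mathcal U$ imply $I(A)=J(A)$. $I\le J$ means $I(A)\neq\mathcal U\Rightarrow I(A)=J(A)$ for all $A$. $I_{/S}$ is $I$ on $S$ and $\mathcal U$ elsewhere. $B\equiv_I\alpha$ means $J(B)=\alpha$ for all $J$ with $I\le J$. $T_R(I)(A)=\alpha$ if there is a clause $A\leftarrow B$ in $R$ with $B\equiv_I\alpha$, and $\mathcal U$ otherwise. $H'$ is sound w.r.t. $\mathcal P$ if $F,H'$ are compatible and $H'_{/Head(\mathcal P)}\le T_R(F\oplus H')$. The support $s^H_{\mathcal P}$ is the maximal (w.r.t. $\le$) interpretation $H'\le H$ that is sound w.r.t. $\mathcal P$, i.e. $\bigoplus\{H'\mid H'\le H,\ H'\text{ sound}\}$. *)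

theory Defs
  imports Main
begin

record 'v bilat =
  tle :: "'v \<Rightarrow> 'v \<Rightarrow> bool"
  kle :: "'v \<Rightarrow> 'v \<Rightarrow> bool"
  bneg :: "'v \<Rightarrow> 'v"

definition is_lub :: "('v \<Rightarrow> 'v \<Rightarrow> bool) \<Rightarrow> 'v set \<Rightarrow> 'v \<Rightarrow> bool" where
  "is_lub r S x \<longleftrightarrow> (\<forall>y\<in>S. r y x) \<and> (\<forall>z. (\<forall>y\<in>S. r y z) \<longrightarrow> r x z)"

definition is_glb :: "('v \<Rightarrow> 'v \<Rightarrow> bool) \<Rightarrow> 'v set \<Rightarrow> 'v \<Rightarrow> bool" where
  "is_glb r S x \<longleftrightarrow> (\<forall>y\<in>S. r x y) \<and> (\<forall>z. (\<forall>y\<in>S. r z y) \<longrightarrow> r z x)"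

definition lub :: "('v \<Rightarrow> 'v \<Rightarrow> bool) \<Rightarrow> 'v set \<Rightarrow> 'v" where
  "lub r S = (THE x. is_lub r S x)"

definition glb :: "('v \<Rightarrow> 'v \<Rightarrow> bool) \<Rightarrow> 'v set \<Rightarrow> 'v" where
  "glb r S = (THE x. is_glb r S x)"

definition is_partial_order :: "('v \<Rightarrow> 'v \<Rightarrow> bool) \<Rightarrow> bool" where
  "is_partial_order r \<longleftrightarrow> (\<forall>x. r x x) \<and> (\<forall>x y. r x y \<and> r y x \<longrightarrow> x = y)
     \<and> (\<forall>x y z. r x y \<and> r y z \<longrightarrow> r x z)"

definition TSup :: "'v bilat \<Rightarrow> 'v set \<Rightarrow> 'v" where "TSup L S = lub (tle L) S"
definition TInf :: "'v bilat \<Rightarrow> 'v set \<Rightarrow> 'v" where "TInf L S = glb (tle L) S"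
definition KSup :: "'v bilat \<Rightarrow> 'v set \<Rightarrow> 'v" where "KSup L S = lub (kle L) S"
definition KInf :: "'v bilat \<Rightarrow> 'v set \<Rightarrow> 'v" where "KInf L S = glb (kle L) S"

definition bconj :: "'v bilat \<Rightarrow> 'v \<Rightarrow> 'v \<Rightarrow> 'v" where "bconj L x y = TInf L {x, y}"
definition bdisj :: "'v bilat \<Rightarrow> 'v \<Rightarrow> 'v \<Rightarrow> 'v" where "bdisj L x y = TSup L {x, y}"
definition btimes :: "'v bilat \<Rightarrow> 'v \<Rightarrow> 'v \<Rightarrow> 'v" where "btimes L x y = KInf L {x, y}"
definition bplus :: "'v bilat \<Rightarrow> 'v \<Rightarrow> 'v \<Rightarrow> 'v" where "bplus L x y = KSup L {x, y}"

definition bU :: "'v bilat \<Rightarrow> 'v" where "bU L = KSup L {}"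

text \<open>Families \<open>(a_i, b_i)_{i\<in>I}\<close> are represented
  by the set of pairs \<open>{(a_i,b_i)}\<close>.\<close>
definition bilattice :: "'v bilat \<Rightarrow> bool" where
  "bilattice L \<longleftrightarrow>
     is_partial_order (tle L) \<and> is_partial_order (kle L)
   \<comment> \<open>completeness\<close>
   \<and> (\<forall>S. (\<exists>x. is_lub (tle L) S x) \<and> (\<exists>x. is_glb (tle L) S x)
         \<and> (\<exists>x. is_lub (kle L) S x) \<and> (\<exists>x. is_glb (kle L) S x))
   \<comment> \<open>negation\<close>
   \<and> (\<forall>x y. tle L x y \<longrightarrow> tle L (bneg L y) (bneg L x))
   \<and> (\<forall>x y. kle L x y \<longrightarrow> kle L (bneg L x) (bneg L y))
   \<and> (\<forall>x. bneg L (bneg L x) = x)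
   \<comment> \<open>infinitary interlacing\<close>
   \<and> (\<forall>P :: ('v \<times> 'v) set. (\<forall>(a,b)\<in>P. tle L a b) \<longrightarrow>
          tle L (KInf L (fst ` P)) (KInf L (snd ` P)) \<and> tle L (KSup L (fst ` P)) (KSup L (snd ` P)))
   \<and> (\<forall>P :: ('v \<times> 'v) set. (\<forall>(a,b)\<in>P. kle L a b) \<longrightarrow>
          kle L (TInf L (fst ` P)) (TInf L (snd ` P)) \<and> kle L (TSup L (fst ` P)) (TSup L (snd ` P)))
   \<comment> \<open>infinite distributivity (over nonempty sets)\<close>
   \<and> (\<forall>x S. S \<noteq> {} \<longrightarrow>
        bconj L x (TSup L S) = TSup L (bconj L x ` S)
      \<and> bconj L x (KSup L S) = KSup L (bconj L x ` S)
      \<and> bconj L x (KInf L S) = KInf L (bconj L x ` S)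
      \<and> bdisj L x (TInf L S) = TInf L (bdisj L x ` S)
      \<and> bdisj L x (KSup L S) = KSup L (bdisj L x ` S)
      \<and> bdisj L x (KInf L S) = KInf L (bdisj L x ` S)
      \<and> btimes L x (KSup L S) = KSup L (btimes L x ` S)
      \<and> btimes L x (TSup L S) = TSup L (btimes L x ` S)
      \<and> btimes L x (TInf L S) = TInf L (btimes L x ` S)
      \<and> bplus L x (KInf L S) = KInf L (bplus L x ` S)
      \<and> bplus L x (TSup L S) = TSup L (bplus L x ` S)
      \<and> bplus L x (TInf L S) = TInf L (bplus L x ` S))"

text \<open>Ground atoms have type \<open>'a\<close> (the Herbrand base is \<open>UNIV :: 'a set\<close>),
  closed terms have type \<open>'t\<close>; quantifiers are represented by the family of their
  closed instances.\<close>
datatype ('a, 'v, 't) form =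
    PosLit 'a
  | NegLit 'a
  | Val 'v
  | FAnd "('a, 'v, 't) form" "('a, 'v, 't) form"
  | FOr "('a, 'v, 't) form" "('a, 'v, 't) form"
  | FTimes "('a, 'v, 't) form" "('a, 'v, 't) form"
  | FPlus "('a, 'v, 't) form" "('a, 'v, 't) form"
  | FEx "'t \<Rightarrow> ('a, 'v, 't) form"
  | FAll "'t \<Rightarrow> ('a, 'v, 't) form"

primrec eval :: "'v bilat \<Rightarrow> ('a \<Rightarrow> 'v) \<Rightarrow> ('a, 'v, 't) form \<Rightarrow> 'v" where
  "eval L I (PosLit A) = I A"
| "eval L I (NegLit A) = bneg L (I A)"
| "eval L I (Val v) = v"
| "eval L I (FAnd X Y) = bconj L (eval L I X) (eval L I Y)"
| "eval L I (FOr X Y) = bdisj L (eval L I X) (eval L I Y)"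
| "eval L I (FTimes X Y) = btimes L (eval L I X) (eval L I Y)"
| "eval L I (FPlus X Y) = bplus L (eval L I X) (eval L I Y)"
| "eval L I (FEx f) = TSup L (range (\<lambda>t. eval L I (f t)))"
| "eval L I (FAll f) = TInf L (range (\<lambda>t. eval L I (f t)))"

text \<open>A program is a pair \<open>(F, R)\<close>; \<open>R\<close> is a set of ground clauses \<open>(A, B)\<close> meaning \<open>A \<leftarrow> B\<close>.\<close>
definition wf_program :: "('a \<Rightarrow> 'v) \<Rightarrow> ('a \<times> ('a, 'v, 't) form) set \<Rightarrow> bool" where
  "wf_program F R \<longleftrightarrow> finite R \<and> (\<forall>A B B'. (A, B) \<in> R \<and> (A, B') \<in> R \<longrightarrow> B = B')"

definition Head :: "('a \<times> ('a, 'v, 't) form) set \<Rightarrow> 'a set" where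
  "Head R = fst ` R"

definition iplus :: "'v bilat \<Rightarrow> ('a \<Rightarrow> 'v) \<Rightarrow> ('a \<Rightarrow> 'v) \<Rightarrow> ('a \<Rightarrow> 'v)" where
  "iplus L I J = (\<lambda>A. bplus L (I A) (J A))"

definition iBigPlus :: "'v bilat \<Rightarrow> ('a \<Rightarrow> 'v) set \<Rightarrow> ('a \<Rightarrow> 'v)" where
  "iBigPlus L S = (\<lambda>A. KSup L ((\<lambda>I. I A) ` S))"

definition compatible :: "'v bilat \<Rightarrow> ('a \<Rightarrow> 'v) \<Rightarrow> ('a \<Rightarrow> 'v) \<Rightarrow> bool" where
  "compatible L I J \<longleftrightarrow> (\<forall>A. I A \<noteq> bU L \<and> J A \<noteq> bU L \<longrightarrow> I A = J A)"

definition ile :: "'v bilat \<Rightarrow> ('a \<Rightarrow> 'v) \<Rightarrow> ('a \<Rightarrow> 'v) \<Rightarrow> bool" where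
  "ile L I J \<longleftrightarrow> (\<forall>A. I A \<noteq> bU L \<longrightarrow> I A = J A)"

definition restr :: "'v bilat \<Rightarrow> ('a \<Rightarrow> 'v) \<Rightarrow> 'a set \<Rightarrow> ('a \<Rightarrow> 'v)" where
  "restr L I S = (\<lambda>A. if A \<in> S then I A else bU L)"

definition fequiv :: "'v bilat \<Rightarrow> ('a \<Rightarrow> 'v) \<Rightarrow> ('a, 'v, 't) form \<Rightarrow> 'v \<Rightarrow> bool" where
  "fequiv L I B \<alpha> \<longleftrightarrow> (\<forall>J. ile L I J \<longrightarrow> eval L J B = \<alpha>)"

definition T_R :: "'v bilat \<Rightarrow> ('a \<times> ('a, 'v, 't) form) set \<Rightarrow> ('a \<Rightarrow> 'v) \<Rightarrow> ('a \<Rightarrow> 'v)" where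
  "T_R L R I = (\<lambda>A. if (\<exists>B \<alpha>. (A, B) \<in> R \<and> fequiv L I B \<alpha>)
                    then (THE \<alpha>. \<exists>B. (A, B) \<in> R \<and> fequiv L I B \<alpha>) else bU L)"

definition sound :: "'v bilat \<Rightarrow> ('a \<Rightarrow> 'v) \<Rightarrow> ('a \<times> ('a, 'v, 't) form) set \<Rightarrow> ('a \<Rightarrow> 'v) \<Rightarrow> bool" where
  "sound L F R H' \<longleftrightarrow> compatible L F H' \<and> ile L (restr L H' (Head R)) (T_R L R (iplus L F H'))"

definition support :: "'v bilat \<Rightarrow> ('a \<Rightarrow> 'v) \<Rightarrow> ('a \<times> ('a, 'v, 't) form) set \<Rightarrow> ('a \<Rightarrow> 'v) \<Rightarrow> ('a \<Rightarrow> 'v)" where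
  "support L F R H = iBigPlus L {H'. ile L H' H \<and> sound L F R H'}"

definition IF :: "'v bilat \<Rightarrow> ('a \<Rightarrow> 'v) \<Rightarrow> ('a \<Rightarrow> 'v) \<Rightarrow> 'a set" where
  "IF L F H = {A. F A \<noteq> bU L \<and> H A \<noteq> bU L \<and> F A \<noteq> H A}"

primrec PFi :: "'v bilat \<Rightarrow> ('a \<Rightarrow> 'v) \<Rightarrow> ('a \<times> ('a, 'v, 't) form) set \<Rightarrow> ('a \<Rightarrow> 'v) \<Rightarrow> nat \<Rightarrow> 'a set" where
  "PFi L F R H 0 = {}"
| "PFi L F R H (Suc i) =
     {A. \<exists>B. (A, B) \<in> R \<and>
        \<not> fequiv L (iplus L F (restr L H ((UNIV - IF L F H) - PFi L F R H i))) B (H A)}"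

definition PF :: "'v bilat \<Rightarrow> ('a \<Rightarrow> 'v) \<Rightarrow> ('a \<times> ('a, 'v, 't) form) set \<Rightarrow> ('a \<Rightarrow> 'v) \<Rightarrow> 'a set" where
  "PF L F R H = (\<Union>i. PFi L F R H i)"

end

theory Submission
  imports Defs
begin

text \<open>A sound hypothesis \<open>H' \<le> H\<close> agrees with \<open>H\<close> wherever it is defined, and
  compatibility with \<open>F\<close> keeps it off \<open>IF(F,H)\<close>. By induction on \<open>i\<close> it is also
  undefined on \<open>PF\<^sub>i\<close>: \<open>F \<oplus> H'\<close> lies below \<open>F \<oplus> H\<^bsub>/(HB - IF) - PF\<^sub>i\<^sub>-\<^sub>1\<^esub>\<close>,
  so a clause body that the larger interpretation does not force to \<open>H(A)\<close> cannot
  be forced by the smaller one, while soundness would demand it. Conversely, the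
  \<open>PF\<^sub>i\<close> are contained in the finite set of heads, so the sequence becomes stationary,
  and at its limit \<open>H\<^bsub>/(HB - IF) - PF\<^esub>\<close> is itself sound. It is thus the greatest sound
  hypothesis below \<open>H\<close>, and the \<open>\<oplus>\<close>-join of a family of interpretations that all
  agree with one member where defined is that member.\<close>

lemma mono_finite_Union_stable:
  fixes f :: "nat \<Rightarrow> 'a set"
  assumes "mono f" "finite (\<Union>k. f k)"
  obtains n where "\<And>m. n \<le> m \<Longrightarrow> f m = (\<Union>k. f k)"
proof -
  have "f i \<subseteq> f j \<or> f j \<subseteq> f i" for i j
    using le_cases[of i j] monoD[OF assms(1)] by metis
  then have "subset.chain UNIV (range f)"
    unfolding subset.chain_def by auto
  then obtain B where "B \<in> range f" "(\<Union>k. f k) \<subseteq> B"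
    using finite_subset_Union_chain[OF assms(2) order_refl] by blast
  then obtain n where n: "(\<Union>k. f k) \<subseteq> f n"
    by blast
  have "f m = (\<Union>k. f k)" if "n \<le> m" for m
    using n monoD[OF assms(1) that] by blast
  then show thesis
    by (rule that)
qed

lemma lub_unique:
  assumes "is_partial_order r" "is_lub r S x"
  shows "lub r S = x"
  unfolding lub_def
proof (rule the_equality)
  show "is_lub r S x" by fact
  fix y assume "is_lub r S y"
  with assms show "y = x" unfolding is_lub_def is_partial_order_def by blast
qed

lemma bilattice_kle_partial_order: "bilattice L \<Longrightarrow> is_partial_order (kle L)"
  unfolding bilattice_def by (elim conjE)

lemma bilattice_kle_lub_ex:
  assumes "bilattice L"
  shows "\<exists>x. is_lub (kle L) S x"
proof -
  have "\<forall>S. (\<exists>x. is_lub (tle L) S x) \<and> (\<exists>x. is_glb (tle L) S x)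
      \<and> (\<exists>x. is_lub (kle L) S x) \<and> (\<exists>x. is_glb (kle L) S x)"
    using assms unfolding bilattice_def by (elim conjE)
  then show ?thesis by blast
qed

lemma bilattice_KSup_is_lub:
  assumes "bilattice L"
  shows "is_lub (kle L) S (KSup L S)"
proof -
  obtain x where "is_lub (kle L) S x"
    using bilattice_kle_lub_ex[OF assms] ..
  then show ?thesis
    unfolding KSup_def using lub_unique[OF bilattice_kle_partial_order[OF assms]] by simp
qed

lemma bU_kle: "bilattice L \<Longrightarrow> kle L (bU L) z"
  using bilattice_KSup_is_lub[of L "{}"] unfolding bU_def is_lub_def by simp

lemma KSup_bU_insert:
  assumes "bilattice L" "S \<subseteq> {bU L, x}" "x \<in> S"
  shows "KSup L S = x"
proof -
  have po: "is_partial_order (kle L)"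
    using assms(1) by (rule bilattice_kle_partial_order)
  have "is_lub (kle L) S x"
    unfolding is_lub_def
  proof (intro conjI allI impI ballI)
    fix y assume "y \<in> S"
    then have "y = bU L \<or> y = x"
      using assms(2) by blast
    then show "kle L y x"
      using po bU_kle[OF assms(1)] unfolding is_partial_order_def by blast
  next
    fix z assume "\<forall>y\<in>S. kle L y z"
    then show "kle L x z"
      using assms(3) by blast
  qed
  then show ?thesis
    unfolding KSup_def by (rule lub_unique[OF po])
qed

lemma bplus_bU_right: "bilattice L \<Longrightarrow> bplus L x (bU L) = x"
  unfolding bplus_def by (rule KSup_bU_insert) auto

lemma bplus_idem: "bilattice L \<Longrightarrow> bplus L x x = x"
  unfolding bplus_def by (rule KSup_bU_insert) auto

lemma ile_trans: "ile L I J \<Longrightarrow> ile L J K \<Longrightarrow> ile L I K"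
  unfolding ile_def by metis

lemma ile_restr_iff:
  "ile L I (restr L H S) \<longleftrightarrow> ile L I H \<and> (\<forall>A. I A \<noteq> bU L \<longrightarrow> A \<in> S)"
  unfolding ile_def restr_def by auto

lemma restr_ile: "ile L (restr L H S) H"
  unfolding ile_def restr_def by simp

lemma restr_mono: "S \<subseteq> S' \<Longrightarrow> ile L (restr L H S) (restr L H S')"
  unfolding ile_def restr_def by auto

lemma iplus_ile_mono:
  assumes "bilattice L" "ile L I J" "compatible L F J"
  shows "ile L (iplus L F I) (iplus L F J)"
  unfolding ile_def iplus_def
proof (intro allI impI)
  fix A assume defined: "bplus L (F A) (I A) \<noteq> bU L"
  show "bplus L (F A) (I A) = bplus L (F A) (J A)"
  proof (cases "I A = bU L")
    case True
    show ?thesis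
    proof (cases "J A = bU L")
      case False
      have "F A \<noteq> bU L"
        using defined True bplus_bU_right[OF assms(1)] by simp
      then have "F A = J A"
        using False assms(3) unfolding compatible_def by blast
      then show ?thesis
        using True by (simp add: bplus_bU_right[OF assms(1)] bplus_idem[OF assms(1)])
    qed (simp add: True)
  qed (use assms(2) in \<open>simp add: ile_def\<close>)
qed

lemma fequiv_ile_mono: "ile L I J \<Longrightarrow> fequiv L I B \<alpha> \<Longrightarrow> fequiv L J B \<alpha>"
  unfolding fequiv_def using ile_trans by blast

lemma fequiv_imp_eval: "fequiv L I B \<alpha> \<Longrightarrow> eval L I B = \<alpha>"
  unfolding fequiv_def ile_def by blast

lemma iBigPlus_greatest:
  assumes "bilattice L" "G \<in> S" "\<And>I. I \<in> S \<Longrightarrow> ile L I G"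
  shows "iBigPlus L S = G"
proof
  fix A
  have "(\<lambda>I. I A) ` S \<subseteq> {bU L, G A}"
    using assms(3) unfolding ile_def by blast
  moreover have "G A \<in> (\<lambda>I. I A) ` S"
    using assms(2) by blast
  ultimately show "iBigPlus L S A = G A"
    unfolding iBigPlus_def using KSup_bU_insert[OF assms(1)] by blast
qed

lemma T_R_eqI:
  assumes "wf_program F R" "(A, B) \<in> R" "fequiv L I B \<alpha>"
  shows "T_R L R I A = \<alpha>"
proof -
  have "(THE \<alpha>. \<exists>B. (A, B) \<in> R \<and> fequiv L I B \<alpha>) = \<alpha>"
  proof (rule the_equality)
    show "\<exists>B. (A, B) \<in> R \<and> fequiv L I B \<alpha>"
      using assms by blast
    fix \<beta> assume "\<exists>B. (A, B) \<in> R \<and> fequiv L I B \<beta>"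
    then obtain B' where "(A, B') \<in> R" "fequiv L I B' \<beta>" by blast
    moreover from this have "B' = B"
      using assms unfolding wf_program_def by blast
    ultimately show "\<beta> = \<alpha>"
      using fequiv_imp_eval assms(3) by metis
  qed
  then show ?thesis
    unfolding T_R_def using assms by auto
qed

lemma sound_fequiv:
  assumes "wf_program F R" "sound L F R H'" "(A, B) \<in> R" "H' A \<noteq> bU L"
  shows "fequiv L (iplus L F H') B (H' A)"
proof -
  have "A \<in> Head R"
    using assms(3) unfolding Head_def by force
  then have T_R_value: "T_R L R (iplus L F H') A = H' A"
    using assms(2,4) unfolding sound_def ile_def restr_def by metis
  then obtain B' \<alpha> where "(A, B') \<in> R" "fequiv L (iplus L F H') B' \<alpha>"
    using assms(4) unfolding T_R_def by (auto split: if_splits)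
  moreover from this have "B' = B"
    using assms(1,3) unfolding wf_program_def by blast
  ultimately show ?thesis
    using T_R_eqI[OF assms(1)] T_R_value by metis
qed

abbreviation restr_consistent ::
    "'v bilat \<Rightarrow> ('a \<Rightarrow> 'v) \<Rightarrow> ('a \<Rightarrow> 'v) \<Rightarrow> 'a set \<Rightarrow> ('a \<Rightarrow> 'v)" where
  "restr_consistent L F H X \<equiv> restr L H ((UNIV - IF L F H) - X)"

lemma compatible_restr_consistent: "compatible L F (restr_consistent L F H X)"
  unfolding compatible_def restr_def IF_def by auto

lemma iplus_restr_consistent_antimono:
  assumes "bilattice L" "X \<subseteq> Y"
  shows "ile L (iplus L F (restr_consistent L F H Y)) (iplus L F (restr_consistent L F H X))"
  using assms by (intro iplus_ile_mono restr_mono compatible_restr_consistent) auto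

lemma PFi_Suc_mono:
  assumes "bilattice L"
  shows "PFi L F R H i \<subseteq> PFi L F R H (Suc i)"
proof (induction i)
  case (Suc i)
  show ?case
  proof
    fix A assume "A \<in> PFi L F R H (Suc i)"
    then obtain B where "(A, B) \<in> R"
      and "\<not> fequiv L (iplus L F (restr_consistent L F H (PFi L F R H i))) B (H A)"
      by auto
    then show "A \<in> PFi L F R H (Suc (Suc i))"
      using fequiv_ile_mono[OF iplus_restr_consistent_antimono[OF assms Suc]]
      by (subst PFi.simps(2)) blast
  qed
qed simp

lemma PFi_subset_Head: "PFi L F R H i \<subseteq> Head R"
  by (cases i) (auto simp: Head_def intro: rev_image_eqI)

lemma PF_stable:
  assumes "bilattice L" "wf_program F R"
  obtains n where "PFi L F R H n = PF L F R H" "PFi L F R H (Suc n) = PF L F R H"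
proof -
  have "mono (PFi L F R H)"
    unfolding mono_iff_le_Suc by (rule allI, rule PFi_Suc_mono[OF assms(1)])
  moreover have "finite (Head R)"
    using assms(2) unfolding wf_program_def Head_def by simp
  then have "finite (\<Union>i. PFi L F R H i)"
    using PFi_subset_Head by (meson UN_least finite_subset)
  ultimately obtain n where "\<And>m. n \<le> m \<Longrightarrow> PFi L F R H m = (\<Union>i. PFi L F R H i)"
    by (rule mono_finite_Union_stable) blast
  then have "PFi L F R H n = PF L F R H" "PFi L F R H (Suc n) = PF L F R H"
    unfolding PF_def by (metis le_SucI order_refl)+
  then show thesis
    by (rule that)
qed

lemma sound_below_not_IF:
  assumes "ile L H' H" "sound L F R H'" "H' A \<noteq> bU L"
  shows "A \<notin> IF L F H"
  using assms unfolding IF_def ile_def sound_def compatible_def by auto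

lemma sound_below_not_PFi:
  assumes "bilattice L" "wf_program F R" "ile L H' H" "sound L F R H'"
  shows "H' A \<noteq> bU L \<Longrightarrow> A \<notin> PFi L F R H i"
proof (induction i arbitrary: A)
  case (Suc i)
  have "ile L H' (restr_consistent L F H (PFi L F R H i))"
    using assms(3) Suc.IH sound_below_not_IF[OF assms(3,4)] by (auto simp: ile_restr_iff)
  then have below: "ile L (iplus L F H') (iplus L F (restr_consistent L F H (PFi L F R H i)))"
    by (rule iplus_ile_mono[OF assms(1) _ compatible_restr_consistent])
  show ?case
  proof
    assume "A \<in> PFi L F R H (Suc i)"
    then obtain B where "(A, B) \<in> R"
      and "\<not> fequiv L (iplus L F (restr_consistent L F H (PFi L F R H i))) B (H A)"
      by auto
    moreover have "H' A = H A"
      using assms(3) Suc.prems unfolding ile_def by blast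
    ultimately show False
      using sound_fequiv[OF assms(2,4)] Suc.prems fequiv_ile_mono[OF below] by metis
  qed
qed simp

lemma sound_below_ile_restr_consistent_PF:
  assumes "bilattice L" "wf_program F R" "ile L H' H" "sound L F R H'"
  shows "ile L H' (restr_consistent L F H (PF L F R H))"
  using assms(3) sound_below_not_IF[OF assms(3,4)] sound_below_not_PFi[OF assms]
  by (auto simp: ile_restr_iff PF_def)

lemma sound_restr_consistent_PF:
  assumes "bilattice L" "wf_program F R"
  shows "sound L F R (restr_consistent L F H (PF L F R H))"
    (is "sound L F R ?K")
proof -
  obtain n where n: "PFi L F R H n = PF L F R H" "PFi L F R H (Suc n) = PF L F R H"
    using PF_stable[OF assms] .
  have "restr L ?K (Head R) A = T_R L R (iplus L F ?K) A"
    if "restr L ?K (Head R) A \<noteq> bU L" for A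
  proof -
    from that obtain B where B: "(A, B) \<in> R" and A: "A \<notin> IF L F H" "A \<notin> PF L F R H"
      and "restr L ?K (Head R) A = H A"
      unfolding restr_def Head_def by (auto split: if_splits)
    moreover have "fequiv L (iplus L F ?K) B (H A)"
      using B A n by auto
    ultimately show ?thesis
      using T_R_eqI[OF assms(2) B] by metis
  qed
  then show ?thesis
    unfolding sound_def ile_def using compatible_restr_consistent by blast
qed

theorem mainTheorem5:
  fixes L :: "'v bilat"
    and F :: "'a \<Rightarrow> 'v"
    and R :: "('a \<times> ('a, 'v, 't) form) set"
    and H :: "'a \<Rightarrow> 'v"
  assumes "bilattice L"
    and "wf_program F R"
  shows "support L F R H = restr L H ((UNIV - IF L F H) - PF L F R H)"
  unfolding support_def
proof (rule iBigPlus_greatest[OF assms(1)])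
  show "restr_consistent L F H (PF L F R H) \<in> {H'. ile L H' H \<and> sound L F R H'}"
    using sound_restr_consistent_PF[OF assms] restr_ile by blast
  show "\<And>H'. H' \<in> {H'. ile L H' H \<and> sound L F R H'} \<Longrightarrow>
      ile L H' (restr_consistent L F H (PF L F R H))"
    using sound_below_ile_restr_consistent_PF[OF assms] by blast
qed

end
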